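(* Let $n\ge 3$, let $\mathbf{x}$ be a vertex of $P^n_{\mathrm{SEP}}$ and let $ab$ be an edge with $x_{ab}=1$. Then $\mathrm{Gap}^+(\mathrm{bb}(\mathbf{x},ab))\ge\mathrm{Gap}^+(\mathbf{x})$.
   Context: $K_n=(V_n,E_n)$ is the complete undirected graph on $n$ nodes; $\delta(S)$ is the set of edges with exactly one endpoint in $S$. $P^n_{\mathrm{SEP}}=\{\mathbf{x}\in\mathbb{R}^{E_n} : \sum_{e\in\delta(v)}x_e=2\ \forall v;\ \sum_{e\in\delta(S)}x_e\ge 2\ \forall S \text{ with } 3\le|S|\le n-3;\ 0\le x_e\le 1\}$; a vertex is an extreme point. A cost $\mathbf{c}\in\mathbb{R}^{E_n}_{\ge0}$ is metric if $c_{ik}+c_{kj}\ge c_{ij}$ for all distinct $i,j,k$; $\mathrm{TSP}(\mathbf{c})$ is the minimum cost of a Hamiltonian cycle. $\mathrm{Gap}^+(\mathbf{x})=\sup\{\mathrm{TSP}(\mathbf{c})/(\mathbf{c}\cdot\mathbf{x}) : \mathbf{c}\text{ metric on } K_n\}$. bb-move: for $\mathbf{x}\in P^n_{\mathrm{SEP}}$ and an edge $ab$ with $x_{ab}=1$, $\mathrm{bb}(\mathbf{x},ab)=\mathbf{x}'\in\mathbb{R}^{E_{n+1}}$, where $V_{n+1}=V_n\cup\{w\}$, defined by $x'_{ab}=0$, $x'_{aw}=x'_{wb}=1$, $x'_e=0$ for $e\in\delta(w)\setminus\{aw,wb\}$, and $x'_e=x_e$ for all other edges (it is known that $\mathrm{bb}(\mathbf{x},ab)$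 is a vertex of $P^{n+1}_{\mathrm{SEP}}$ iff $\mathbf{x}$ is a vertex of $P^n_{\mathrm{SEP}}$). *)

theory Defs
  imports Complex_Main "HOL-Library.Extended_Real" "HOL-Combinatorics.Permutations"
begin

text \<open>Nodes of K_n are 0,...,n-1; an edge is a 2-element set of nodes.
  A point of R^{E_n} is a function on edges that vanishes off E_n.\<close>

definition edges :: "nat \<Rightarrow> nat set set" where
  "edges n = {{i, j} | i j. i < n \<and> j < n \<and> i \<noteq> j}"

definition cut :: "nat \<Rightarrow> nat set \<Rightarrow> nat set set" where
  "cut n S = {e \<in> edges n. card (e \<inter> S) = 1}"

definition SEP :: "nat \<Rightarrow> (nat set \<Rightarrow> real) set" where
  "SEP n = {x. (\<forall>e. e \<notin> edges n \<longrightarrow> x e = 0)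
     \<and> (\<forall>v < n. (\<Sum>e\<in>cut n {v}. x e) = 2)
     \<and> (\<forall>S. S \<subseteq> {..<n} \<and> 3 \<le> card S \<and> card S + 3 \<le> n \<longrightarrow> (\<Sum>e\<in>cut n S. x e) \<ge> 2)
     \<and> (\<forall>e\<in>edges n. 0 \<le> x e \<and> x e \<le> 1)}"

definition is_vertex :: "nat \<Rightarrow> (nat set \<Rightarrow> real) \<Rightarrow> bool" where
  "is_vertex n x \<longleftrightarrow> x \<in> SEP n \<and>
     (\<forall>y\<in>SEP n. \<forall>z\<in>SEP n. \<forall>u::real. 0 < u \<and> u < 1 \<and> x = (\<lambda>e. u * y e + (1 - u) * z e) \<longrightarrow> y = z)"

definition metric_cost :: "nat \<Rightarrow> (nat set \<Rightarrow> real) \<Rightarrow> bool" where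
  "metric_cost n c \<longleftrightarrow> (\<forall>e\<in>edges n. 0 \<le> c e) \<and>
     (\<forall>i<n. \<forall>j<n. \<forall>k<n. i \<noteq> j \<and> j \<noteq> k \<and> i \<noteq> k \<longrightarrow> c {i, k} + c {k, j} \<ge> c {i, j})"

text \<open>Hamiltonian cycles on {0..n-1} visit nodes in the cyclic order p 0, ..., p (n-1).\<close>
definition tour_cost :: "nat \<Rightarrow> (nat set \<Rightarrow> real) \<Rightarrow> (nat \<Rightarrow> nat) \<Rightarrow> real" where
  "tour_cost n c p = (\<Sum>i<n. c {p i, p (Suc i mod n)})"

definition TSP :: "nat \<Rightarrow> (nat set \<Rightarrow> real) \<Rightarrow> real" where
  "TSP n c = Min (tour_cost n c ` {p. p permutes {..<n}})"

definition dotp :: "nat \<Rightarrow> (nat set \<Rightarrow> real) \<Rightarrow> (nat set \<Rightarrow> real) \<Rightarrow> real" where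
  "dotp n c x = (\<Sum>e\<in>edges n. c e * x e)"

definition GapPlus :: "nat \<Rightarrow> (nat set \<Rightarrow> real) \<Rightarrow> ereal" where
  "GapPlus n x = (SUP c\<in>{c. metric_cost n c}. ereal (TSP n c / dotp n c x))"

text \<open>bb-move: the new node w is n (so V_{n+1} = {0..n}).\<close>
definition bb :: "nat \<Rightarrow> (nat set \<Rightarrow> real) \<Rightarrow> nat \<Rightarrow> nat \<Rightarrow> (nat set \<Rightarrow> real)" where
  "bb n x a b = (\<lambda>e. if e = {a, b} then 0
                     else if e = {a, n} \<or> e = {n, b} then 1
                     else if n \<in> e then 0
                     else x e)"

end

theory Submission imports Defs begin

(* Given a metric cost c on K_n, make the new node w = n a copy of a, i.e. pull c back along
   the map sending w to a and fixing all other nodes.  This is again metric, and its inner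
   product with bb(x, ab) equals c x: the unit of x on ab moves to wb, which costs c_ab, while
   aw costs 0.  Conversely, rotating an optimal tour for the new cost so that w comes last and
   shortcutting w gives a tour of K_n that is no more expensive, by the triangle inequality at a.
   So every ratio in the supremum defining Gap+(x) is matched by one for bb(x, ab). *)

lemma edge_in_edges: "i < n \<Longrightarrow> j < n \<Longrightarrow> i \<noteq> j \<Longrightarrow> {i, j} \<in> edges n"
  unfolding edges_def by blast

lemma finite_edges: "finite (edges n)"
proof (rule finite_subset)
  show "edges n \<subseteq> Pow {..<n}" unfolding edges_def by auto
qed simp

lemma edges_Suc: "edges (Suc n) = edges n \<union> (\<lambda>v. {v, n}) ` {..<n}"
  unfolding edges_def by (auto simp: less_Suc_eq)

lemma size_notin_edge: "e \<in> edges n \<Longrightarrow> n \<notin> e"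
  unfolding edges_def by auto

lemma TSP_le_tour_cost: "p permutes {..<n} \<Longrightarrow> TSP n c \<le> tour_cost n c p"
  unfolding TSP_def by (rule Min_le) (simp_all add: finite_permutations)

lemma TSP_attained:
  obtains p where "p permutes {..<n}" "TSP n c = tour_cost n c p"
proof -
  have "TSP n c \<in> tour_cost n c ` {p. p permutes {..<n}}"
    unfolding TSP_def by (rule Min_in) (auto simp: finite_permutations intro: permutes_id)
  then show ?thesis using that by blast
qed

definition rotate_nodes :: "nat \<Rightarrow> nat \<Rightarrow> nat \<Rightarrow> nat" where
  "rotate_nodes m s i = (if i < m then (i + s) mod m else i)"

lemma rotate_nodes_permutes:
  assumes "0 < m"
  shows "rotate_nodes m s permutes {..<m}"
proof (rule bij_imp_permutes)
  have "inj_on (\<lambda>i. (i + s) mod m) {..<m}"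
  proof (rule inj_onI)
    fix i j assume "i \<in> {..<m}" "j \<in> {..<m}" "(i + s) mod m = (j + s) mod m"
    moreover from this(3) have "i mod m = j mod m"
      by (simp add: nat_mod_eq_iff)
    ultimately show "i = j" by simp
  qed
  moreover have "(\<lambda>i. (i + s) mod m) ` {..<m} \<subseteq> {..<m}"
    using assms by auto
  ultimately have "bij_betw (\<lambda>i. (i + s) mod m) {..<m} {..<m}"
    by (simp add: bij_betw_def endo_inj_surj)
  then show "bij_betw (rotate_nodes m s) {..<m} {..<m}"
    by (rule bij_betw_cong[THEN iffD1, rotated]) (simp add: rotate_nodes_def)
qed (simp add: rotate_nodes_def)

lemma tour_cost_rotate:
  assumes "0 < m"
  shows "tour_cost m c (p \<circ> rotate_nodes m s) = tour_cost m c p"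
proof -
  define leg where "leg j = c {p j, p (Suc j mod m)}" for j
  have "tour_cost m c (p \<circ> rotate_nodes m s) = (\<Sum>i<m. leg (rotate_nodes m s i))"
    unfolding tour_cost_def leg_def
    by (rule sum.cong) (simp_all add: rotate_nodes_def assms mod_simps)
  also have "\<dots> = (\<Sum>i<m. leg i)"
    using sum.permute[OF rotate_nodes_permutes[OF assms], of leg] by (simp add: comp_def)
  finally show ?thesis unfolding tour_cost_def leg_def .
qed

lemma tour_fixing_last_node:
  assumes "p permutes {..<Suc n}"
  obtains q where "q permutes {..<n}" "tour_cost (Suc n) c q = tour_cost (Suc n) c p"
proof -
  have "n \<in> p ` {..<Suc n}"
    using permutes_image[OF assms] by simp
  then obtain k where k: "k < Suc n" "p k = n"
    by auto
  define q where "q = p \<circ> rotate_nodes (Suc n) (Suc k)"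
  have q: "q permutes {..<Suc n}"
    unfolding q_def by (rule permutes_compose[OF rotate_nodes_permutes assms]) simp
  have qn: "q n = n"
  proof -
    have "(n + Suc k) mod Suc n = (k + Suc n) mod Suc n"
      by (simp add: add.commute)
    also have "\<dots> = k"
      using k(1) by (simp only: mod_add_self2 mod_less)
    finally have "(n + Suc k) mod Suc n = k" .
    then show ?thesis using k(2) by (simp add: q_def rotate_nodes_def)
  qed
  have "q permutes {..<n}"
    by (rule permutes_superset[OF q]) (use qn in auto)
  moreover have "tour_cost (Suc n) c q = tour_cost (Suc n) c p"
    unfolding q_def by (rule tour_cost_rotate) simp
  ultimately show ?thesis using that by blast
qed

lemma tour_cost_Suc:
  "tour_cost (Suc (Suc m)) c q
     = tour_cost (Suc m) c q - c {q m, q 0} + c {q m, q (Suc m)} + c {q (Suc m), q 0}"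
proof -
  have "(\<Sum>i<m. c {q i, q (Suc i mod k)}) = (\<Sum>i<m. c {q i, q (Suc i)})" if "m < k" for k
    using that by (intro sum.cong) auto
  then show ?thesis unfolding tour_cost_def by simp
qed

definition node_dist :: "(nat set \<Rightarrow> real) \<Rightarrow> nat \<Rightarrow> nat \<Rightarrow> real" where
  "node_dist c u v = (if u = v then 0 else c {u, v})"

definition pullback_cost :: "(nat \<Rightarrow> nat) \<Rightarrow> (nat set \<Rightarrow> real) \<Rightarrow> nat set \<Rightarrow> real" where
  "pullback_cost f c e = node_dist c (f (Min e)) (f (Max e))"

lemma node_dist_commute: "node_dist c u v = node_dist c v u"
  unfolding node_dist_def by (simp add: insert_commute)

lemma pullback_cost_edge: "i \<noteq> j \<Longrightarrow> pullback_cost f c {i, j} = node_dist c (f i) (f j)"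
  unfolding pullback_cost_def by (cases "i < j") (auto simp: min_def max_def node_dist_commute)

lemma node_dist_nonneg: "metric_cost n c \<Longrightarrow> u < n \<Longrightarrow> v < n \<Longrightarrow> 0 \<le> node_dist c u v"
  unfolding node_dist_def metric_cost_def using edge_in_edges by auto

lemma node_dist_triangle:
  assumes "metric_cost n c" "u < n" "v < n" "w < n"
  shows "node_dist c u w \<le> node_dist c u v + node_dist c v w"
proof -
  have "0 \<le> node_dist c u v" "0 \<le> node_dist c v w" "0 \<le> node_dist c u w"
    using node_dist_nonneg assms by auto
  then show ?thesis
    using assms unfolding metric_cost_def node_dist_def by (auto split: if_splits)
qed

lemma metric_cost_pullback:
  assumes "metric_cost n c" "\<And>v. v < m \<Longrightarrow> f v < n"
  shows "metric_cost m (pullback_cost f c)"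
  unfolding metric_cost_def
proof (intro conjI ballI allI impI)
  fix e assume "e \<in> edges m"
  then obtain i j where "e = {i, j}" "i < m" "j < m" "i \<noteq> j"
    unfolding edges_def by blast
  then show "0 \<le> pullback_cost f c e"
    using pullback_cost_edge node_dist_nonneg[OF assms(1)] assms(2) by simp
next
  fix i j k assume "i < m" "j < m" "k < m" "i \<noteq> j \<and> j \<noteq> k \<and> i \<noteq> k"
  then show "pullback_cost f c {i, j} \<le> pullback_cost f c {i, k} + pullback_cost f c {k, j}"
    using pullback_cost_edge node_dist_triangle[OF assms(1)] assms(2) by simp
qed

definition copy_node :: "nat \<Rightarrow> nat \<Rightarrow> nat \<Rightarrow> nat" where
  "copy_node n a v = (if v = n then a else v)"

lemma pullback_copy_node_old_edge:
  "i < n \<Longrightarrow> j < n \<Longrightarrow> i \<noteq> j \<Longrightarrow> pullback_cost (copy_node n a) c {i, j} = c {i, j}"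
  by (simp add: pullback_cost_edge copy_node_def node_dist_def)

lemma pullback_copy_node_new_edge:
  "v < n \<Longrightarrow> pullback_cost (copy_node n a) c {v, n} = node_dist c v a"
  by (simp add: pullback_cost_edge copy_node_def)

lemma metric_cost_pullback_copy_node:
  "metric_cost n c \<Longrightarrow> a < n \<Longrightarrow> metric_cost (Suc n) (pullback_cost (copy_node n a) c)"
  by (rule metric_cost_pullback) (auto simp: copy_node_def)

lemma tour_cost_le_tour_cost_copy_node:
  assumes "metric_cost n c" "a < n" "2 \<le> n" "q permutes {..<n}"
  shows "tour_cost n c q \<le> tour_cost (Suc n) (pullback_cost (copy_node n a) c) q"
proof -
  let ?c' = "pullback_cost (copy_node n a) c"
  obtain m where m: "n = Suc m" "0 < m"
    using assms(3) by (cases n) auto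
  have q_lt: "i < n \<Longrightarrow> q i < n" for i
    using permutes_in_image[OF assms(4)] by simp
  have q_inj: "i < n \<Longrightarrow> j < n \<Longrightarrow> i \<noteq> j \<Longrightarrow> q i \<noteq> q j" for i j
    using permutes_inj[OF assms(4)] by (meson injD)
  have qn: "q n = n"
    using permutes_not_in[OF assms(4)] by simp
  have "tour_cost n ?c' q = tour_cost n c q"
    unfolding tour_cost_def
  proof (rule sum.cong)
    fix i assume "i \<in> {..<n}"
    moreover from this have "Suc i mod n \<noteq> i"
      using m by (cases "i = m") auto
    ultimately show "?c' {q i, q (Suc i mod n)} = c {q i, q (Suc i mod n)}"
      using m by (intro pullback_copy_node_old_edge q_lt q_inj) auto
  qed simp
  moreover have "?c' {q m, q 0} \<le> ?c' {q m, q n} + ?c' {q n, q 0}"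
  proof -
    have ends: "q m < n" "q 0 < n" "q m \<noteq> q 0"
      using q_lt[of m] q_lt[of 0] q_inj[of m 0] m by auto
    then have "?c' {q m, q 0} = node_dist c (q m) (q 0)"
      by (simp add: pullback_cost_edge copy_node_def)
    also have "\<dots> \<le> node_dist c (q m) a + node_dist c a (q 0)"
      using ends assms(2) by (intro node_dist_triangle[OF assms(1)])
    also have "\<dots> = ?c' {q m, q n} + ?c' {q n, q 0}"
      using ends qn by (simp add: pullback_cost_edge copy_node_def node_dist_commute)
    finally show ?thesis .
  qed
  ultimately show ?thesis
    using tour_cost_Suc[of m ?c' q] m(1) by simp
qed

lemma TSP_le_TSP_copy_node:
  assumes "metric_cost n c" "a < n" "2 \<le> n"
  shows "TSP n c \<le> TSP (Suc n) (pullback_cost (copy_node n a) c)"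
proof -
  let ?c' = "pullback_cost (copy_node n a) c"
  obtain p where p: "p permutes {..<Suc n}" "TSP (Suc n) ?c' = tour_cost (Suc n) ?c' p"
    by (rule TSP_attained)
  obtain q where q: "q permutes {..<n}" "tour_cost (Suc n) ?c' q = tour_cost (Suc n) ?c' p"
    using p(1) by (rule tour_fixing_last_node)
  have "TSP n c \<le> tour_cost n c q"
    using q(1) by (rule TSP_le_tour_cost)
  also have "\<dots> \<le> tour_cost (Suc n) ?c' q"
    using assms q(1) by (rule tour_cost_le_tour_cost_copy_node)
  finally show ?thesis
    using p(2) q(2) by simp
qed

lemma dotp_Suc: "dotp (Suc n) c y = dotp n c y + (\<Sum>v<n. c {v, n} * y {v, n})"
proof -
  have "inj_on (\<lambda>v. {v, n}) {..<n}"
    by (rule inj_onI) (auto simp: doubleton_eq_iff)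
  moreover have "edges n \<inter> (\<lambda>v. {v, n}) ` {..<n} = {}"
    using size_notin_edge by blast
  ultimately show ?thesis
    unfolding dotp_def edges_Suc by (simp add: sum.union_disjoint finite_edges sum.reindex)
qed

lemma dotp_nonneg: "metric_cost n c \<Longrightarrow> x \<in> SEP n \<Longrightarrow> 0 \<le> dotp n c x"
  unfolding dotp_def SEP_def metric_cost_def by (auto intro: sum_nonneg)

lemma dotp_copy_node_bb:
  assumes "a < n" "b < n" "a \<noteq> b" "x {a, b} = 1"
  shows "dotp (Suc n) (pullback_cost (copy_node n a) c) (bb n x a b) = dotp n c x"
proof -
  let ?c' = "pullback_cost (copy_node n a) c" and ?x' = "bb n x a b"
  have ab: "{a, b} \<in> edges n"
    using assms(1-3) by (rule edge_in_edges)
  have "dotp n ?c' ?x' = (\<Sum>e\<in>edges n. if e = {a, b} then 0 else c e * x e)"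
    unfolding dotp_def
  proof (rule sum.cong)
    fix e assume e: "e \<in> edges n"
    then obtain i j where "e = {i, j}" "i < n" "j < n" "i \<noteq> j"
      unfolding edges_def by blast
    then have "?c' e = c e"
      by (simp add: pullback_copy_node_old_edge)
    with size_notin_edge[OF e] show "?c' e * ?x' e = (if e = {a, b} then 0 else c e * x e)"
      unfolding bb_def by auto
  qed simp
  also have "\<dots> = (\<Sum>e\<in>edges n - {{a, b}}. c e * x e)"
    by (rule sum.mono_neutral_cong_right) (auto simp: finite_edges)
  also have "\<dots> = dotp n c x - c {a, b}"
    unfolding dotp_def using sum.remove[OF finite_edges ab, of "\<lambda>e. c e * x e"] assms(4) by simp
  finally have old_edges: "dotp n ?c' ?x' = dotp n c x - c {a, b}" .
  have "(\<Sum>v<n. ?c' {v, n} * ?x' {v, n}) = (\<Sum>v<n. if v = b then c {a, b} else 0)"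
  proof (rule sum.cong)
    fix v assume "v \<in> {..<n}"
    then have "?x' {v, n} = (if v = a \<or> v = b then 1 else 0)" "?c' {v, n} = node_dist c v a"
      using assms unfolding bb_def by (auto simp: doubleton_eq_iff pullback_copy_node_new_edge)
    then show "?c' {v, n} * ?x' {v, n} = (if v = b then c {a, b} else 0)"
      using assms(3) by (auto simp: node_dist_def insert_commute)
  qed simp
  also have "\<dots> = c {a, b}"
    using assms(2) by simp
  finally show ?thesis
    using old_edges dotp_Suc by simp
qed

theorem mainTheorem5:
  fixes n :: nat and x :: "nat set \<Rightarrow> real" and a b :: nat
  assumes "n \<ge> 3"
    and "is_vertex n x"
    and "a < n" and "b < n" and "a \<noteq> b"
    and "x {a, b} = 1"
  shows "GapPlus (Suc n) (bb n x a b) \<ge> GapPlus n x"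
  unfolding GapPlus_def
proof (rule SUP_mono)
  fix c assume "c \<in> {c. metric_cost n c}"
  then have c: "metric_cost n c" by simp
  let ?c' = "pullback_cost (copy_node n a) c"
  have "x \<in> SEP n"
    using assms(2) unfolding is_vertex_def by simp
  then have "TSP n c / dotp n c x \<le> TSP (Suc n) ?c' / dotp n c x"
    using TSP_le_TSP_copy_node[OF c assms(3)] assms(1) dotp_nonneg[OF c]
    by (simp add: divide_right_mono)
  also have "\<dots> = TSP (Suc n) ?c' / dotp (Suc n) ?c' (bb n x a b)"
    using dotp_copy_node_bb[of a n b x c, OF assms(3-6)] by simp
  finally show "\<exists>c'\<in>{c. metric_cost (Suc n) c}.
      ereal (TSP n c / dotp n c x) \<le> ereal (TSP (Suc n) c' / dotp (Suc n) c' (bb n x a b))"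
    using metric_cost_pullback_copy_node[OF c assms(3)] by auto
qed

end
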